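(* Let $\{1,\mu_1,\mu_2,\mu_3\}$ be a quaternion basis ($\mu_1,\mu_2$ orthogonal pure unit quaternions, $\mu_3=\mu_1\mu_2$), and let $q=z_1+z_2\mu_2$ with $z_1,z_2$ random variables in $\mathbb{C}_{\mu_1}$ be a centered quaternion Gaussian random variable which is $(\mu_1,\mu_1)$-proper, i.e. $q\stackrel{d}{=}\mu_1 q\mu_1$. Let ${\bf q}_{\mathbb{C}}=[z_1,z_1^{\star},z_2,z_2^{\star}]^T$. Then $$\mathbb{E}[{\bf q}_{\mathbb{C}}{\bf q}_{\mathbb{C}}^{\dagger}]=\begin{bmatrix}\sigma^2 & \alpha & 0 & 0\\ \alpha^{\star} & \sigma^2 & 0 & 0\\ 0 & 0 & \varsigma^2 & \delta\\ 0 & 0 & \delta^{\star} & \varsigma^2\end{bmatrix},$$ where $\sigma^2=\mathbb{E}[|z_1|^2]\in\mathbb{R}$, $\varsigma^2=\mathbb{E}[|z_2|^2]\in\mathbb{R}$, $\alpha=\mathbb{E}[z_1^2]\in\mathbb{C}_{\mu_1}$ and $\delta=\mathbb{E}[z_2^2]\in\mathbb{C}_{\mu_1}$.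
   Context: $\mathbb{H}$ denotes the quaternions; $\mathbb{C}_{\mu_1}=\mathbb{R}\oplus\mu_1\mathbb{R}$ is the commutative subfield isomorphic to $\mathbb{C}$; $^{\star}$ denotes conjugation and $\dagger$ conjugate transpose. A quaternion Gaussian random variable is one whose four real components are jointly Gaussian; centered means $\mathbb{E}[q]=0$. $\stackrel{d}{=}$ denotes equality in distribution. *)

theory Defs
  imports "HOL-Probability.Probability" "HOL-Library.Numeral_Type"
begin

text \<open>Quaternions, represented as real 4-vectors (components w.r.t. the
canonical basis 1, i, j, k; indices 0,1,2,3 of the index type 4), with the
Hamilton product and conjugation.  The Euclidean norm / inner product of
real^4 are the usual quaternion modulus / real inner product.\<close>

type_synonym quat = "real ^ 4"

definition qmk :: "real \<Rightarrow> real \<Rightarrow> real \<Rightarrow> real \<Rightarrow> quat" where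
  "qmk a b c d = (\<chi> i. if i = 0 then a else if i = 1 then b else if i = 2 then c else d)"

definition qof_real :: "real \<Rightarrow> quat" where
  "qof_real a = qmk a 0 0 0"

definition qmul :: "quat \<Rightarrow> quat \<Rightarrow> quat" where
  "qmul p q = qmk
     (p$0 * q$0 - p$1 * q$1 - p$2 * q$2 - p$3 * q$3)
     (p$0 * q$1 + p$1 * q$0 + p$2 * q$3 - p$3 * q$2)
     (p$0 * q$2 - p$1 * q$3 + p$2 * q$0 + p$3 * q$1)
     (p$0 * q$3 + p$1 * q$2 - p$2 * q$1 + p$3 * q$0)"

definition qcnj :: "quat \<Rightarrow> quat" where
  "qcnj p = qmk (p$0) (- p$1) (- p$2) (- p$3)"

definition pure_unit :: "quat \<Rightarrow> bool" where
  "pure_unit \<mu> \<longleftrightarrow> \<mu>$0 = 0 \<and> norm \<mu> = 1"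

definition Cmu :: "quat \<Rightarrow> quat set" where
  "Cmu \<mu> = {x. \<exists>a b. x = qof_real a + b *\<^sub>R \<mu>}"

text \<open>Quaternion Gaussian: the four real components are jointly Gaussian,
i.e. every real linear combination of them (= inner c (q \<omega>)) is a
univariate Gaussian, possibly degenerate (point mass).\<close>
definition quat_gaussian :: "'a measure \<Rightarrow> ('a \<Rightarrow> quat) \<Rightarrow> bool" where
  "quat_gaussian M q \<longleftrightarrow> q \<in> borel_measurable M \<and>
     (\<forall>c::quat. \<exists>m s. s \<ge> 0 \<and>
        distr M borel (\<lambda>\<omega>. inner c (q \<omega>)) =
          (if s = 0 then return borel m else density lborel (normal_density m s)))"

abbreviation qexp :: "'a measure \<Rightarrow> ('a \<Rightarrow> quat) \<Rightarrow> quat" where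
  "qexp M f \<equiv> integral\<^sup>L M f"

end

(* Since \<mu>1 commutes with C_\<mu>1 and anticommutes with \<mu>2, the map x \<mapsto> \<mu>1 x \<mu>1 sends
   z1 + z2 \<mu>2 to -z1 + z2 \<mu>2.  Properness therefore says that (z1, z2) and (-z1, z2) have the
   same law, so every moment that is odd in z1 vanishes; these are exactly the entries of the
   off-diagonal blocks.  The diagonal blocks follow from z z\<^sup>\<star> = |z|\<^sup>2 and (z z)\<^sup>\<star> = z\<^sup>\<star> z\<^sup>\<star>. *)

theory Submission
  imports Defs
begin

lemma four_eq_zero_type_4: "(4::4) = 0"
  by simp

lemma qmk_nth [simp]:
  "qmk a b c d $ 0 = a" "qmk a b c d $ 1 = b" "qmk a b c d $ 2 = c" "qmk a b c d $ 3 = d"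
  by (simp_all add: qmk_def)

lemma quat_eq_iff: "(x::quat) = y \<longleftrightarrow> x$0 = y$0 \<and> x$1 = y$1 \<and> x$2 = y$2 \<and> x$3 = y$3"
  by (auto simp: vec_eq_iff forall_4 four_eq_zero_type_4)

lemma inner_quat: "inner (x::quat) y = x$0 * y$0 + x$1 * y$1 + x$2 * y$2 + x$3 * y$3"
  by (simp add: inner_vec_def sum_4 four_eq_zero_type_4)

lemma pure_unit_iff:
  "pure_unit \<mu> \<longleftrightarrow> \<mu>$0 = 0 \<and> \<mu>$1 * \<mu>$1 + \<mu>$2 * \<mu>$2 + \<mu>$3 * \<mu>$3 = 1"
  by (auto simp: pure_unit_def norm_eq_1 inner_quat)

lemma qcnj_qcnj [simp]: "qcnj (qcnj x) = x"
  by (simp add: qcnj_def quat_eq_iff)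

lemma qcnj_minus [simp]: "qcnj (- x) = - qcnj x"
  by (simp add: qcnj_def quat_eq_iff)

lemma norm_qcnj [simp]: "norm (qcnj x) = norm x"
  by (simp add: norm_eq_sqrt_inner inner_quat qcnj_def)

lemma qmul_minus_left [simp]: "qmul (- x) y = - qmul x y"
  by (simp add: qmul_def quat_eq_iff)

lemma qmul_minus_right [simp]: "qmul x (- y) = - qmul x y"
  by (simp add: qmul_def quat_eq_iff)

lemma qcnj_qmul: "qcnj (qmul x y) = qmul (qcnj y) (qcnj x)"
  by (simp add: qmul_def qcnj_def quat_eq_iff algebra_simps)

lemma qmul_qcnj_self: "qmul x (qcnj x) = qof_real ((norm x)\<^sup>2)"
  by (simp add: qmul_def qcnj_def qof_real_def quat_eq_iff power2_norm_eq_inner inner_quat)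

lemma qcnj_qmul_self: "qmul (qcnj x) x = qof_real ((norm x)\<^sup>2)"
  by (simp add: qmul_def qcnj_def qof_real_def quat_eq_iff power2_norm_eq_inner inner_quat
      algebra_simps)

lemma qmk_as_sum:
  "qmk a b c d = a *\<^sub>R qmk 1 0 0 0 + b *\<^sub>R qmk 0 1 0 0 + c *\<^sub>R qmk 0 0 1 0 + d *\<^sub>R qmk 0 0 0 1"
  by (simp add: quat_eq_iff)

lemma continuous_on_qmul [continuous_intros]:
  "continuous_on S f \<Longrightarrow> continuous_on S g \<Longrightarrow> continuous_on S (\<lambda>x. qmul (f x) (g x))"
  unfolding qmul_def by (subst qmk_as_sum) (intro continuous_intros)

lemma continuous_on_qcnj [continuous_intros]:
  "continuous_on S f \<Longrightarrow> continuous_on S (\<lambda>x. qcnj (f x))"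
  unfolding qcnj_def by (subst qmk_as_sum) (intro continuous_intros)

lemma continuous_on_qof_real [continuous_intros]:
  "continuous_on S f \<Longrightarrow> continuous_on S (\<lambda>x. qof_real (f x))"
  unfolding qof_real_def by (subst qmk_as_sum) (intro continuous_intros)

lemma bounded_linear_qcnj: "bounded_linear qcnj"
  by (auto simp: linear_conv_bounded_linear[symmetric] linear_iff qcnj_def quat_eq_iff)

lemma bounded_linear_qof_real: "bounded_linear qof_real"
  by (auto simp: linear_conv_bounded_linear[symmetric] linear_iff qof_real_def quat_eq_iff)

lemma integral_qcnj: "(\<integral>x. qcnj (f x) \<partial>M) = qcnj (\<integral>x. f x \<partial>M)"
  by (rule integral_bounded_linear'[OF bounded_linear_qcnj bounded_linear_qcnj]) simp

lemma integral_qof_real: "(\<integral>x. qof_real (f x) \<partial>M) = qof_real (\<integral>x. f x \<partial>M)"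
  by (rule integral_bounded_linear'[OF bounded_linear_qof_real bounded_linear_vec_nth[of 0]])
     (simp add: qof_real_def)

lemma integral_qmul_qcnj_self:
  "(\<integral>\<omega>. qmul (z \<omega>) (qcnj (z \<omega>)) \<partial>M) = qof_real (\<integral>\<omega>. (norm (z \<omega>))\<^sup>2 \<partial>M)"
  by (simp add: qmul_qcnj_self integral_qof_real)

lemma integral_qcnj_qmul_self:
  "(\<integral>\<omega>. qmul (qcnj (z \<omega>)) (z \<omega>) \<partial>M) = qof_real (\<integral>\<omega>. (norm (z \<omega>))\<^sup>2 \<partial>M)"
  by (simp add: qcnj_qmul_self integral_qof_real)

lemma integral_qcnj_square:
  "(\<integral>\<omega>. qmul (qcnj (z \<omega>)) (qcnj (z \<omega>)) \<partial>M) = qcnj (\<integral>\<omega>. qmul (z \<omega>) (z \<omega>) \<partial>M)"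
  by (simp add: qcnj_qmul[symmetric] integral_qcnj)

definition Cmu_proj :: "quat \<Rightarrow> quat \<Rightarrow> quat" where
  "Cmu_proj \<mu> x = qof_real (x$0) + inner x \<mu> *\<^sub>R \<mu>"

lemmas quat_simps = qmul_def qcnj_def qof_real_def Cmu_proj_def inner_quat quat_eq_iff

lemma continuous_on_Cmu_proj [continuous_intros]:
  "continuous_on S f \<Longrightarrow> continuous_on S (\<lambda>x. Cmu_proj \<mu> (f x))"
  unfolding Cmu_proj_def by (intro continuous_intros)

lemma bounded_linear_Cmu_proj: "bounded_linear (Cmu_proj \<mu>)"
  unfolding Cmu_proj_def
  by (intro bounded_linear_add bounded_linear_compose[OF bounded_linear_qof_real]
      bounded_linear_vec_nth bounded_linear_compose[OF bounded_linear_scaleR_left]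
      bounded_linear_inner_left)

lemma Cmu_iff_Cmu_proj:
  assumes "pure_unit \<mu>"
  shows "x \<in> Cmu \<mu> \<longleftrightarrow> Cmu_proj \<mu> x = x"
proof
  assume "x \<in> Cmu \<mu>"
  then obtain a b where x: "x = qof_real a + b *\<^sub>R \<mu>"
    by (auto simp: Cmu_def)
  show "Cmu_proj \<mu> x = x"
    using assms unfolding x pure_unit_iff by (simp add: quat_simps algebra_simps; algebra)
next
  assume "Cmu_proj \<mu> x = x"
  then show "x \<in> Cmu \<mu>"
    unfolding Cmu_proj_def Cmu_def by (metis (mono_tags, lifting) mem_Collect_eq)
qed

lemma qmul_in_Cmu:
  assumes "pure_unit \<mu>" "z \<in> Cmu \<mu>" "w \<in> Cmu \<mu>"
  shows "qmul z w \<in> Cmu \<mu>"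
proof -
  obtain a b c d where z: "z = qof_real a + b *\<^sub>R \<mu>" and w: "w = qof_real c + d *\<^sub>R \<mu>"
    using assms(2,3) by (auto simp: Cmu_def)
  have "qmul z w = qof_real (a * c - b * d) + (a * d + b * c) *\<^sub>R \<mu>"
    using assms(1) unfolding z w pure_unit_iff by (simp add: quat_simps algebra_simps; algebra)
  then show ?thesis
    by (auto simp: Cmu_def)
qed

lemma integral_in_Cmu:
  assumes "pure_unit \<mu>" "\<And>x. x \<in> space M \<Longrightarrow> f x \<in> Cmu \<mu>"
  shows "(\<integral>x. f x \<partial>M) \<in> Cmu \<mu>"
proof (cases "integrable M f")
  case True
  have "Cmu_proj \<mu> (\<integral>x. f x \<partial>M) = (\<integral>x. Cmu_proj \<mu> (f x) \<partial>M)"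
    by (rule integral_bounded_linear[OF bounded_linear_Cmu_proj True, symmetric])
  also have "\<dots> = (\<integral>x. f x \<partial>M)"
    using assms by (intro Bochner_Integration.integral_cong) (auto simp: Cmu_iff_Cmu_proj)
  finally show ?thesis
    using assms(1) by (simp add: Cmu_iff_Cmu_proj)
next
  case False
  have "0 = qof_real 0 + 0 *\<^sub>R \<mu>"
    by (simp add: qof_real_def quat_eq_iff)
  then show ?thesis
    unfolding not_integrable_integral_eq[OF False] Cmu_def by blast
qed

lemma Cmu_proj_sandwich:
  assumes "pure_unit \<mu>" "pure_unit \<nu>" "inner \<mu> \<nu> = 0"
  shows "Cmu_proj \<mu> (qmul (qmul \<mu> x) \<mu>) = - Cmu_proj \<mu> x"
    and "Cmu_proj \<mu> (qmul (qmul (qmul \<mu> x) \<mu>) (qcnj \<nu>)) = Cmu_proj \<mu> (qmul x (qcnj \<nu>))"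
  using assms unfolding pure_unit_iff
  by (simp_all add: quat_simps algebra_simps; algebra)+

lemma Cmu_proj_decomp:
  assumes "pure_unit \<mu>" "pure_unit \<nu>" "inner \<mu> \<nu> = 0" "z1 \<in> Cmu \<mu>" "z2 \<in> Cmu \<mu>"
  shows "Cmu_proj \<mu> (z1 + qmul z2 \<nu>) = z1"
    and "Cmu_proj \<mu> (qmul (z1 + qmul z2 \<nu>) (qcnj \<nu>)) = z2"
proof -
  obtain a b where z1: "z1 = qof_real a + b *\<^sub>R \<mu>"
    using assms(4) by (auto simp: Cmu_def)
  obtain c d where z2: "z2 = qof_real c + d *\<^sub>R \<mu>"
    using assms(5) by (auto simp: Cmu_def)
  show "Cmu_proj \<mu> (z1 + qmul z2 \<nu>) = z1"
    using assms(1-3) unfolding z1 z2 pure_unit_iff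
    by (simp add: quat_simps algebra_simps; algebra)
  show "Cmu_proj \<mu> (qmul (z1 + qmul z2 \<nu>) (qcnj \<nu>)) = z2"
    using assms(1-3) unfolding z1 z2 pure_unit_iff
    by (simp add: quat_simps algebra_simps; algebra)
qed

lemma integral_eq_0_if_odd_under_law_symmetry:
  fixes G :: "'b \<Rightarrow> 'c::{banach, second_countable_topology}"
  assumes X: "X \<in> measurable M N" and \<sigma>: "\<sigma> \<in> measurable N N"
    and law: "distr M N X = distr M N (\<lambda>\<omega>. \<sigma> (X \<omega>))"
    and G: "G \<in> borel_measurable N"
    and odd: "\<And>x. x \<in> space N \<Longrightarrow> G (\<sigma> x) = - G x"
  shows "(\<integral>\<omega>. G (X \<omega>) \<partial>M) = 0"
proof -
  have "(\<integral>\<omega>. G (X \<omega>) \<partial>M) = (\<integral>x. G x \<partial>distr M N X)"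
    by (rule integral_distr[OF X G, symmetric])
  also have "\<dots> = (\<integral>x. G x \<partial>distr M N (\<lambda>\<omega>. \<sigma> (X \<omega>)))"
    by (simp only: law)
  also have "\<dots> = (\<integral>\<omega>. G (\<sigma> (X \<omega>)) \<partial>M)"
    using X \<sigma> G by (intro integral_distr) auto
  also have "\<dots> = (\<integral>\<omega>. - G (X \<omega>) \<partial>M)"
    using X by (intro Bochner_Integration.integral_cong) (auto simp: odd measurable_space)
  finally show ?thesis
    by (simp add: eq_neg_iff_add_eq_0 flip: scaleR_2)
qed

lemma proper_odd_moment_eq_0:
  fixes F :: "quat \<Rightarrow> quat \<Rightarrow> quat"
  assumes \<mu>\<nu>: "pure_unit \<mu>" "pure_unit \<nu>" "inner \<mu> \<nu> = 0"
    and q: "q \<in> borel_measurable M"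
    and z: "\<And>\<omega>. \<omega> \<in> space M \<Longrightarrow> z1 \<omega> \<in> Cmu \<mu>" "\<And>\<omega>. \<omega> \<in> space M \<Longrightarrow> z2 \<omega> \<in> Cmu \<mu>"
    and q_eq: "\<And>\<omega>. \<omega> \<in> space M \<Longrightarrow> q \<omega> = z1 \<omega> + qmul (z2 \<omega>) \<nu>"
    and proper: "distr M borel q = distr M borel (\<lambda>\<omega>. qmul (qmul \<mu> (q \<omega>)) \<mu>)"
    and F_cont: "continuous_on UNIV (\<lambda>p. F (fst p) (snd p))"
    and F_odd: "\<And>a b. F (- a) b = - F a b"
  shows "(\<integral>\<omega>. F (z1 \<omega>) (z2 \<omega>) \<partial>M) = 0"
proof -
  define G where "G x = F (Cmu_proj \<mu> x) (Cmu_proj \<mu> (qmul x (qcnj \<nu>)))" for x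
  have "continuous_on UNIV G"
    unfolding G_def
    by (rule continuous_on_compose2[OF F_cont, where f = "\<lambda>x. (_ x, _ x)", simplified])
       (intro continuous_intros)
  then have G: "G \<in> borel_measurable borel"
    by (rule borel_measurable_continuous_onI)
  have \<sigma>: "(\<lambda>x. qmul (qmul \<mu> x) \<mu>) \<in> borel_measurable borel"
    by (intro borel_measurable_continuous_onI continuous_intros)
  have "(\<integral>\<omega>. F (z1 \<omega>) (z2 \<omega>) \<partial>M) = (\<integral>\<omega>. G (q \<omega>) \<partial>M)"
    using \<mu>\<nu> z by (intro Bochner_Integration.integral_cong) (simp_all add: G_def q_eq Cmu_proj_decomp)
  also have "\<dots> = 0"
    using q \<sigma> proper G
    by (rule integral_eq_0_if_odd_under_law_symmetry) (simp add: G_def Cmu_proj_sandwich[OF \<mu>\<nu>] F_odd)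
  finally show ?thesis .
qed

theorem mainTheorem6:
  fixes M :: "'a measure" and \<mu>1 \<mu>2 :: quat and q z1 z2 :: "'a \<Rightarrow> quat"
  assumes "prob_space M"
    and "pure_unit \<mu>1" and "pure_unit \<mu>2" and "inner \<mu>1 \<mu>2 = 0"
    and "z1 \<in> borel_measurable M" and "z2 \<in> borel_measurable M"
    and "\<And>\<omega>. \<omega> \<in> space M \<Longrightarrow> z1 \<omega> \<in> Cmu \<mu>1"
    and "\<And>\<omega>. \<omega> \<in> space M \<Longrightarrow> z2 \<omega> \<in> Cmu \<mu>1"
    and "\<And>\<omega>. \<omega> \<in> space M \<Longrightarrow> q \<omega> = z1 \<omega> + qmul (z2 \<omega>) \<mu>2"
    and "quat_gaussian M q"
    and "qexp M q = 0"
    and "distr M borel q = distr M borel (\<lambda>\<omega>. qmul (qmul \<mu>1 (q \<omega>)) \<mu>1)"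
  shows "let qC = (\<lambda>\<omega>. [z1 \<omega>, qcnj (z1 \<omega>), z2 \<omega>, qcnj (z2 \<omega>)]);
             \<sigma>2 = integral\<^sup>L M (\<lambda>\<omega>. (norm (z1 \<omega>))\<^sup>2);
             s2 = integral\<^sup>L M (\<lambda>\<omega>. (norm (z2 \<omega>))\<^sup>2);
             \<alpha> = qexp M (\<lambda>\<omega>. qmul (z1 \<omega>) (z1 \<omega>));
             \<delta> = qexp M (\<lambda>\<omega>. qmul (z2 \<omega>) (z2 \<omega>));
             R = [[qof_real \<sigma>2, \<alpha>, 0, 0],
                  [qcnj \<alpha>, qof_real \<sigma>2, 0, 0],
                  [0, 0, qof_real s2, \<delta>],
                  [0, 0, qcnj \<delta>, qof_real s2]]
         in (\<forall>i<4. \<forall>j<4.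
               qexp M (\<lambda>\<omega>. qmul (qC \<omega> ! i) (qcnj (qC \<omega> ! j))) = R ! i ! j)
            \<and> \<alpha> \<in> Cmu \<mu>1 \<and> \<delta> \<in> Cmu \<mu>1"
proof -
  have q: "q \<in> borel_measurable M"
    using \<open>quat_gaussian M q\<close> by (simp add: quat_gaussian_def)
  have cross: "(\<integral>\<omega>. F (z1 \<omega>) (z2 \<omega>) \<partial>M) = 0"
    if "continuous_on UNIV (\<lambda>p. F (fst p) (snd p))" "\<And>a b. F (- a) b = - F a b"
    for F :: "quat \<Rightarrow> quat \<Rightarrow> quat"
    using proper_odd_moment_eq_0[where F = F, OF assms(2-4) q assms(7-9) assms(12) that] .
  have "qexp M (\<lambda>\<omega>. qmul (z1 \<omega>) (qcnj (z2 \<omega>))) = 0"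
    "qexp M (\<lambda>\<omega>. qmul (z1 \<omega>) (z2 \<omega>)) = 0"
    "qexp M (\<lambda>\<omega>. qmul (qcnj (z1 \<omega>)) (qcnj (z2 \<omega>))) = 0"
    "qexp M (\<lambda>\<omega>. qmul (qcnj (z1 \<omega>)) (z2 \<omega>)) = 0"
    "qexp M (\<lambda>\<omega>. qmul (z2 \<omega>) (qcnj (z1 \<omega>))) = 0"
    "qexp M (\<lambda>\<omega>. qmul (z2 \<omega>) (z1 \<omega>)) = 0"
    "qexp M (\<lambda>\<omega>. qmul (qcnj (z2 \<omega>)) (qcnj (z1 \<omega>))) = 0"
    "qexp M (\<lambda>\<omega>. qmul (qcnj (z2 \<omega>)) (z1 \<omega>)) = 0"
    by (rule cross; (intro continuous_intros)?; simp)+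
  moreover have "qexp M (\<lambda>\<omega>. qmul (z \<omega>) (z \<omega>)) \<in> Cmu \<mu>1"
    if "\<And>\<omega>. \<omega> \<in> space M \<Longrightarrow> z \<omega> \<in> Cmu \<mu>1" for z
    using assms(2) that by (intro integral_in_Cmu qmul_in_Cmu)
  ultimately show ?thesis
    using assms(7,8)
    by (simp add: Let_def All_less_Suc numeral_eq_Suc integral_qmul_qcnj_self
        integral_qcnj_qmul_self integral_qcnj_square)
qed

end
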